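(* Fix $\lambda\in[0,1)$ and $p\in[0,1]$. There is a unique $\mathbf{v}^I\in\overline{\mathcal{V}}^\infty$ with $\mathbf{F}_i(\mathbf{v}^I)=0$ for all $i\ge 1$. Writing $\mathbf{s}^I_i=\mathbf{v}^I_i-\mathbf{v}^I_{i+1}$ for $i\ge0$, it is given as follows. (1) If $p=0$, then $\mathbf{s}^I_i=\lambda^i$ for all $i\ge1$. (2) If $p\ge\lambda$, then $\mathbf{s}^I_i=0$ for all $i\ge1$. (3) If $0<p<\lambda$ and $\lambda=1-p$, then $\mathbf{s}^I_i=1-\frac{p}{1-p}\,i$ for $1\le i\le \tilde i^*(p,\lambda)$ and $\mathbf{s}^I_i=0$ for $i>\tilde i^*(p,\lambda)$, where $\tilde i^*(p,\lambda)=\lfloor \frac{1-p}{p}\rfloor$. (4) If $0<p<\lambda$ and $\lambda\ne 1-p$, then $\mathbf{s}^I_i=\frac{1-\lambda}{1-(p+\lambda)}\left(\frac{\lambda}{1-p}\right)^i-\frac{p}{1-(p+\lambda)}$ for $1\le i\le i^*(p,\lambda)$ and $\mathbf{s}^I_i=0$ for $i>i^*(p,\lambda)$, where $i^*(p,\lambda)=\left\lfloor \log_{\frac{\lambda}{1-p}}\frac{p}{1-\lambda}\right\rfloor$.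
   Context: $\mathbb{Z}_+=\{0,1,2,\dots\}$. Let $\mathcal{S}=\{\mathbf{s}\in[0,1]^{\mathbb{Z}_+}:1=\mathbf{s}_0\ge\mathbf{s}_1\ge\cdots\ge0\}$, $\overline{\mathcal{S}}^\infty=\{\mathbf{s}\in\mathcal{S}:\sum_{i\ge1}\mathbf{s}_i<\infty\}$, and $\overline{\mathcal{V}}^\infty=\{\mathbf{v}\in\mathbb{R}^{\mathbb{Z}_+}:\mathbf{v}_i=\sum_{j\ge i}\mathbf{s}_j \text{ for all } i, \text{ for some } \mathbf{s}\in\overline{\mathcal{S}}^\infty\}$. For $\mathbf{v}\in\overline{\mathcal{V}}^\infty$ and $i\ge1$ define the drift $\mathbf{F}_i(\mathbf{v})=\lambda(\mathbf{v}_{i-1}-\mathbf{v}_i)-(1-p)(\mathbf{v}_i-\mathbf{v}_{i+1})-g_i(\mathbf{v})$, where $g_i(\mathbf{v})=p$ if $\mathbf{v}_i>0$; $g_i(\mathbf{v})=\min\{\lambda\mathbf{v}_{i-1},p\}$ if $\mathbf{v}_i=0,\mathbf{v}_{i-1}>0$; and $g_i(\mathbf{v})=0$ if $\mathbf{v}_i=\mathbf{v}_{i-1}=0$. *)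

theory Defs
  imports Complex_Main
begin

definition Sbar :: "(nat \<Rightarrow> real) set" where
  "Sbar = {s. s 0 = 1 \<and> (\<forall>i. s (Suc i) \<le> s i) \<and> (\<forall>i. 0 \<le> s i \<and> s i \<le> 1)
              \<and> summable (\<lambda>i. s (i + 1))}"

definition Vbar :: "(nat \<Rightarrow> real) set" where
  "Vbar = {v. \<exists>s\<in>Sbar. \<forall>i. v i = (\<Sum>j. s (j + i))}"

definition gfun :: "real \<Rightarrow> real \<Rightarrow> (nat \<Rightarrow> real) \<Rightarrow> nat \<Rightarrow> real" where
  "gfun lam p v i =
     (if v i > 0 then p
      else if v i = 0 \<and> v (i - 1) > 0 then min (lam * v (i - 1)) p
      else 0)"

definition Fdrift :: "real \<Rightarrow> real \<Rightarrow> (nat \<Rightarrow> real) \<Rightarrow> nat \<Rightarrow> real" where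
  "Fdrift lam p v i = lam * (v (i - 1) - v i) - (1 - p) * (v i - v (i + 1)) - gfun lam p v i"

end

theory Submission
  imports Defs
begin

text \<open>Writing \<open>v\<close> as the tail sums of \<open>s \<in> Sbar\<close>, the drift at \<open>i + 1\<close> only depends
  on \<open>s i\<close> and \<open>s (i + 1)\<close>, and it vanishes exactly when \<open>s (i + 1) = \<phi> (s i)\<close> with
  \<open>\<phi> x = max 0 ((\<lambda> x - p) / (1 - p))\<close>. Hence the equilibrium is unique: \<open>s\<close> is the orbit of
  \<open>1\<close> under \<open>\<phi>\<close>, which is dominated by \<open>\<lambda>\<^sup>i\<close> and therefore lies in \<open>Sbar\<close>. Before it hits
  \<open>0\<close> the orbit follows the affine recursion \<open>r (i + 1) = (\<lambda> r i - p) / (1 - p)\<close>, whose explicit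
  solution gives the closed forms; the cut-off index is where that solution changes sign.\<close>

definition tail_sums :: "(nat \<Rightarrow> real) \<Rightarrow> nat \<Rightarrow> real" where
  "tail_sums s i = (\<Sum>j. s (j + i))"

text \<open>For \<open>p = 1\<close> the division by zero makes the step identically \<open>0\<close>, which is the
  correct dynamics in that case.\<close>

definition equilibrium_step :: "real \<Rightarrow> real \<Rightarrow> real \<Rightarrow> real" where
  "equilibrium_step lam p x = max 0 ((lam * x - p) / (1 - p))"

definition equilibrium_profile :: "real \<Rightarrow> real \<Rightarrow> nat \<Rightarrow> real" where
  "equilibrium_profile lam p i = (equilibrium_step lam p ^^ i) 1"

definition local_drift :: "real \<Rightarrow> real \<Rightarrow> real \<Rightarrow> real \<Rightarrow> real" where
  "local_drift lam p x y =
     lam * x - (1 - p) * y - (if y > 0 then p else if x > 0 then min (lam * x) p else 0)"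

lemma equilibrium_profile_0 [simp]: "equilibrium_profile lam p 0 = 1"
  by (simp add: equilibrium_profile_def)

lemma equilibrium_profile_Suc [simp]:
  "equilibrium_profile lam p (Suc i) = equilibrium_step lam p (equilibrium_profile lam p i)"
  by (simp add: equilibrium_profile_def)

lemma Vbar_eq_tail_sums: "Vbar = tail_sums ` Sbar"
  by (auto simp: Vbar_def tail_sums_def fun_eq_iff)

lemma Sbar_D:
  assumes "s \<in> Sbar"
  shows "s 0 = 1" "0 \<le> s i" "s i \<le> 1" "decseq s" "summable s"
  using assms summable_Suc_iff[of s] by (auto simp: Sbar_def intro: decseq_SucI)

lemma tail_sums_Suc:
  assumes "summable s"
  shows "tail_sums s i = s i + tail_sums s (Suc i)"
  using suminf_split_head[OF assms[unfolded summable_iff_shift[of s i, symmetric]]]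
  by (simp add: tail_sums_def)

lemma tail_sums_nonneg:
  assumes "summable s" "\<And>i. 0 \<le> s i"
  shows "0 \<le> tail_sums s i"
  using assms summable_iff_shift[of s i] by (simp add: tail_sums_def suminf_nonneg)

lemma tail_sums_eq_0_iff:
  assumes "summable s" "\<And>i. 0 \<le> s i" "decseq s"
  shows "tail_sums s i = 0 \<longleftrightarrow> s i = 0"
proof
  assume "tail_sums s i = 0"
  then show "s i = 0"
    using tail_sums_Suc[OF assms(1), of i] tail_sums_nonneg[OF assms(1,2), of "Suc i"] assms(2)[of i]
    by linarith
next
  assume "s i = 0"
  then have "s (j + i) = 0" for j
    using decseqD[OF assms(3), of i "j + i"] assms(2)[of "j + i"] by simp
  then show "tail_sums s i = 0" by (simp add: tail_sums_def)
qed

lemma tail_sums_inj: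
  assumes "summable s" "summable t" "tail_sums s = tail_sums t"
  shows "s = t"
proof
  fix i
  show "s i = t i"
    using tail_sums_Suc[OF assms(1), of i] tail_sums_Suc[OF assms(2), of i] assms(3) by simp
qed

lemma Fdrift_tail_sums:
  assumes "s \<in> Sbar"
  shows "Fdrift lam p (tail_sums s) (Suc i) = local_drift lam p (s i) (s (Suc i))"
proof -
  note s = Sbar_D[OF assms]
  have split: "tail_sums s k = s k + tail_sums s (Suc k)" for k
    using tail_sums_Suc[OF s(5)] .
  have pos_iff: "tail_sums s k > 0 \<longleftrightarrow> s k > 0" for k
    using tail_sums_eq_0_iff[OF s(5,2,4)] tail_sums_nonneg[OF s(5,2)] s(2)
    by (metis order_less_le)
  have "gfun lam p (tail_sums s) (Suc i) =
      (if s (Suc i) > 0 then p else if s i > 0 then min (lam * s i) p else 0)"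
  proof (cases "s (Suc i) > 0")
    case False
    then have "tail_sums s (Suc i) = 0"
      using pos_iff[of "Suc i"] tail_sums_nonneg[OF s(5,2), of "Suc i"] by linarith
    then show ?thesis using False pos_iff[of i] split[of i] by (simp add: gfun_def)
  qed (simp add: gfun_def pos_iff)
  then show ?thesis
    using split[of i] split[of "Suc i"] by (simp add: Fdrift_def local_drift_def)
qed

lemma local_drift_eq_0_iff:
  assumes "0 \<le> lam" "lam < 1" "0 \<le> p" "p \<le> 1" "0 \<le> x" "x \<le> 1" "0 \<le> y"
  shows "local_drift lam p x y = 0 \<longleftrightarrow> y = equilibrium_step lam p x"
proof -
  have lam_x: "lam * x < 1" "lam * x \<le> lam"
    using assms mult_left_le[of x lam] by auto
  have blocked: "lam * x \<le> p \<longleftrightarrow> equilibrium_step lam p x = 0"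
  proof (cases "p = 1")
    case False
    then have "lam * x \<le> p \<longleftrightarrow> (lam * x - p) / (1 - p) \<le> 0"
      using assms by (simp add: divide_le_0_iff)
    then show ?thesis by (simp add: equilibrium_step_def max_def)
  qed (use lam_x in \<open>simp add: equilibrium_step_def\<close>)
  show ?thesis
  proof (cases "y > 0")
    case True
    have "lam * x - (1 - p) * y = p \<longleftrightarrow> y = equilibrium_step lam p x"
    proof (cases "p = 1")
      case False
      then have "lam * x - (1 - p) * y = p \<longleftrightarrow> y = (lam * x - p) / (1 - p)"
        using assms by (auto simp: field_simps)
      then show ?thesis using True by (auto simp: equilibrium_step_def)
    qed (use True lam_x in \<open>auto simp: equilibrium_step_def\<close>)
    then show ?thesis using True by (auto simp: local_drift_def)
  next
    case False
    then have "y = 0" using assms by simp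
    then show ?thesis
      using blocked assms by (auto simp: local_drift_def min_def)
  qed
qed

lemma equilibrium_step_le:
  assumes "0 \<le> lam" "lam \<le> 1" "0 \<le> p" "p \<le> 1" "0 \<le> x" "x \<le> 1"
  shows "equilibrium_step lam p x \<le> lam * x"
proof (cases "p = 1")
  case False
  have "p * (lam * x) \<le> p" using assms by (simp add: mult_left_le mult_le_one)
  then have "(lam * x - p) / (1 - p) \<le> lam * x"
    using False assms by (simp add: divide_le_eq algebra_simps)
  then show ?thesis using assms by (simp add: equilibrium_step_def)
qed (use assms in \<open>simp add: equilibrium_step_def\<close>)

lemma equilibrium_profile_bounds:
  assumes "0 \<le> lam" "lam < 1" "0 \<le> p" "p \<le> 1"
  shows "0 \<le> equilibrium_profile lam p i" "equilibrium_profile lam p i \<le> lam ^ i"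
proof -
  show nonneg: "0 \<le> equilibrium_profile lam p i" for i
    by (cases i) (auto simp: equilibrium_step_def)
  show "equilibrium_profile lam p i \<le> lam ^ i"
  proof (induction i)
    case (Suc i)
    have "lam ^ i \<le> 1" using assms by (simp add: power_le_one)
    then have "equilibrium_profile lam p (Suc i) \<le> lam * equilibrium_profile lam p i"
      using Suc assms equilibrium_step_le[OF assms(1) _ assms(3,4) nonneg] by simp
    also have "\<dots> \<le> lam ^ Suc i" using Suc assms(1) by (simp add: mult_left_mono)
    finally show ?case .
  qed simp
qed

lemma equilibrium_profile_in_Sbar:
  assumes "0 \<le> lam" "lam < 1" "0 \<le> p" "p \<le> 1"
  shows "equilibrium_profile lam p \<in> Sbar"
proof -
  note bounds = equilibrium_profile_bounds[OF assms]
  have le1: "equilibrium_profile lam p i \<le> 1" for i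
    using bounds(2)[of i] power_le_one[OF assms(1) less_imp_le[OF assms(2)], of i] by linarith
  have "equilibrium_profile lam p (Suc i) \<le> lam * equilibrium_profile lam p i" for i
    using equilibrium_step_le[OF assms(1) _ assms(3,4) bounds(1) le1] assms(2) by simp
  also have "lam * equilibrium_profile lam p i \<le> equilibrium_profile lam p i" for i
    using mult_left_le_one_le[OF bounds(1) assms(1)] assms(2) by simp
  finally have "equilibrium_profile lam p (Suc i) \<le> equilibrium_profile lam p i" for i .
  moreover have "summable (equilibrium_profile lam p)"
    using bounds assms
    by (intro summable_comparison_test[OF _ summable_geometric[of lam]]) auto
  ultimately show ?thesis
    using bounds(1) le1 by (simp add: Sbar_def summable_Suc_iff del: equilibrium_profile_Suc)
qed

lemma drift_zero_iff_equilibrium: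
  assumes "0 \<le> lam" "lam < 1" "0 \<le> p" "p \<le> 1" "v \<in> Vbar"
  shows "(\<forall>i\<ge>1. Fdrift lam p v i = 0) \<longleftrightarrow> v = tail_sums (equilibrium_profile lam p)"
proof -
  obtain s where s: "s \<in> Sbar" "v = tail_sums s"
    using assms(5) unfolding Vbar_eq_tail_sums by blast
  note sD = Sbar_D[OF s(1)]
  have "(\<forall>i\<ge>1. Fdrift lam p v i = 0) \<longleftrightarrow> (\<forall>i. Fdrift lam p v (Suc i) = 0)"
    by (auto dest: Suc_le_D)
  also have "\<dots> \<longleftrightarrow> (\<forall>i. s (Suc i) = equilibrium_step lam p (s i))"
    using s Fdrift_tail_sums local_drift_eq_0_iff[OF assms(1-4)] sD by simp
  also have "\<dots> \<longleftrightarrow> s = equilibrium_profile lam p"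
  proof
    assume "\<forall>i. s (Suc i) = equilibrium_step lam p (s i)"
    then have "s i = equilibrium_profile lam p i" for i
      using sD(1) by (induction i) simp_all
    then show "s = equilibrium_profile lam p" ..
  qed simp
  also have "\<dots> \<longleftrightarrow> v = tail_sums (equilibrium_profile lam p)"
    using s(2) tail_sums_inj[OF sD(5) Sbar_D(5)[OF equilibrium_profile_in_Sbar[OF assms(1-4)]]]
    by auto
  finally show ?thesis .
qed

lemma equilibrium_profile_p0: "0 \<le> lam \<Longrightarrow> equilibrium_profile lam 0 i = lam ^ i"
  by (induction i) (simp_all add: equilibrium_step_def)

lemma equilibrium_profile_vanishes:
  assumes "0 \<le> lam" "lam \<le> p" "p \<le> 1" "i \<ge> 1"
  shows "equilibrium_profile lam p i = 0"
proof -
  have step_0: "equilibrium_step lam p x = 0" if "0 \<le> x" "x \<le> 1" for x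
    using that assms mult_left_le[of x lam]
    by (cases "p = 1") (auto simp: equilibrium_step_def divide_le_0_iff)
  have "equilibrium_profile lam p (Suc k) = 0" for k
    by (induction k) (simp_all add: step_0)
  then show ?thesis using assms(4) by (cases i) auto
qed

lemma equilibrium_profile_eq_max_affine:
  assumes "0 \<le> p" "p < 1" "0 \<le> lam"
    and "r 0 = 1" "\<And>i. r (Suc i) = (lam * r i - p) / (1 - p)"
  shows "equilibrium_profile lam p i = max 0 (r i)"
proof (induction i)
  case (Suc i)
  show ?case
  proof (cases "r i \<ge> 0")
    case False
    then have "lam * r i \<le> 0" using assms(3) mult_nonneg_nonpos[of lam "r i"] by simp
    then have "lam * r i - p \<le> 0" using assms(1) by simp
    then have "r (Suc i) \<le> 0" using assms by (simp add: divide_le_0_iff)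
    moreover have "- p / (1 - p) \<le> 0" using assms by simp
    ultimately show ?thesis using Suc False by (simp add: equilibrium_step_def)
  qed (use Suc assms(5) in \<open>simp add: equilibrium_step_def\<close>)
qed (simp add: assms(4))

lemma equilibrium_profile_critical:
  assumes "0 < p" "p < 1" "lam = 1 - p"
  shows "int i \<le> \<lfloor>(1 - p) / p\<rfloor> \<Longrightarrow> equilibrium_profile lam p i = 1 - p / (1 - p) * real i"
    and "\<lfloor>(1 - p) / p\<rfloor> < int i \<Longrightarrow> equilibrium_profile lam p i = 0"
proof -
  define r where "r i = 1 - p / (1 - p) * real i" for i
  have "equilibrium_profile lam p i = max 0 (r i)"
  proof (rule equilibrium_profile_eq_max_affine)
    show "r (Suc i) = (lam * r i - p) / (1 - p)" for i
    proof -
      have "(lam * r i - p) / (1 - p) = r i - p / (1 - p)"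
        using assms by (simp add: diff_divide_distrib)
      then show ?thesis by (simp add: r_def ring_distribs)
    qed
  qed (use assms in \<open>simp_all add: r_def\<close>)
  moreover have "0 \<le> r i \<longleftrightarrow> real i \<le> (1 - p) / p"
    using assms by (simp add: r_def le_divide_eq divide_le_eq mult.commute)
  ultimately show "int i \<le> \<lfloor>(1 - p) / p\<rfloor> \<Longrightarrow> equilibrium_profile lam p i = 1 - p / (1 - p) * real i"
    and "\<lfloor>(1 - p) / p\<rfloor> < int i \<Longrightarrow> equilibrium_profile lam p i = 0"
    by (auto simp: le_floor_iff floor_less_iff r_def)
qed

lemma real_le_log_iff_power:
  fixes c q :: real
  assumes "0 < c" "c \<noteq> 1" "0 < q"
  shows "real i \<le> log c q \<longleftrightarrow> (if c < 1 then q \<le> c ^ i else c ^ i \<le> q)"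
proof -
  have "q \<le> c ^ i \<longleftrightarrow> ln q \<le> real i * ln c" "c ^ i \<le> q \<longleftrightarrow> real i * ln c \<le> ln q"
    using assms by (simp_all add: ln_realpow[symmetric])
  moreover have "ln c < 0 \<longleftrightarrow> c < 1" "ln c \<noteq> 0" using assms by auto
  ultimately show ?thesis
    by (auto simp: log_def le_divide_eq mult.commute)
qed

text \<open>\<open>- p / D\<close> with \<open>D = 1 - (p + \<lambda>)\<close> is the fixed point of the affine recursion, and
  the deviation from it is multiplied by \<open>\<lambda> / (1 - p)\<close> in each step.\<close>

lemma affine_recursion_closed_form:
  fixes lam p D :: real
  assumes "p < 1" "D \<noteq> 0" "lam + D = 1 - p"
  defines "c \<equiv> lam / (1 - p)"
  shows "(1 - lam) / D * c ^ Suc i - p / D = (lam * ((1 - lam) / D * c ^ i - p / D) - p) / (1 - p)"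
proof -
  have "lam * (p / D) + p = p / D * (1 - p)"
    unfolding assms(3)[symmetric] using assms(2) by (simp add: field_simps)
  then have fixed_point: "(lam * (p / D) + p) / (1 - p) = p / D"
    using assms(1) by simp
  have geometric: "lam * ((1 - lam) / D * c ^ i) / (1 - p) = (1 - lam) / D * c ^ Suc i"
    by (simp add: c_def)
  have "(lam * ((1 - lam) / D * c ^ i - p / D) - p) / (1 - p)
      = lam * ((1 - lam) / D * c ^ i) / (1 - p) - (lam * (p / D) + p) / (1 - p)"
    by (simp add: right_diff_distrib diff_divide_distrib add_divide_distrib)
  then show ?thesis by (simp only: fixed_point geometric)
qed

lemma equilibrium_profile_noncritical:
  assumes "0 < p" "p < 1" "0 < lam" "lam < 1" "lam \<noteq> 1 - p"
  shows "int i \<le> \<lfloor>log (lam / (1 - p)) (p / (1 - lam))\<rfloor> \<Longrightarrow> equilibrium_profile lam p i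
           = (1 - lam) / (1 - (p + lam)) * (lam / (1 - p)) ^ i - p / (1 - (p + lam))"
    and "\<lfloor>log (lam / (1 - p)) (p / (1 - lam))\<rfloor> < int i \<Longrightarrow> equilibrium_profile lam p i = 0"
proof -
  define c where "c = lam / (1 - p)"
  define D where "D = 1 - (p + lam)"
  define r where "r i = (1 - lam) / D * c ^ i - p / D" for i
  have D0: "D \<noteq> 0" using assms by (simp add: D_def)
  have "equilibrium_profile lam p i = max 0 (r i)"
  proof (rule equilibrium_profile_eq_max_affine)
    have "r 0 = ((1 - lam) - p) / D" by (simp add: r_def diff_divide_distrib)
    then show "r 0 = 1" using D0 by (simp add: D_def)
    show "r (Suc i) = (lam * r i - p) / (1 - p)" for i
      using affine_recursion_closed_form[OF assms(2) D0] by (simp add: r_def c_def D_def)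
  qed (use assms in auto)
  moreover have "0 \<le> r i \<longleftrightarrow> real i \<le> log c (p / (1 - lam))"
  proof -
    have c: "0 < c" "c \<noteq> 1" "c < 1 \<longleftrightarrow> 0 < D"
      using assms by (auto simp: c_def D_def field_simps)
    have r_eq: "r i = ((1 - lam) * c ^ i - p) / D"
      using D0 by (simp add: r_def field_simps)
    have "real i \<le> log c (p / (1 - lam))
        \<longleftrightarrow> (if c < 1 then p / (1 - lam) \<le> c ^ i else c ^ i \<le> p / (1 - lam))"
      using assms by (intro real_le_log_iff_power c(1,2)) simp
    also have "\<dots> \<longleftrightarrow> (if 0 < D then p \<le> (1 - lam) * c ^ i else (1 - lam) * c ^ i \<le> p)"
      using assms(4) c(3) by (simp add: divide_le_eq le_divide_eq mult.commute)
    also have "\<dots> \<longleftrightarrow> 0 \<le> r i"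
      unfolding r_eq using D0 by (auto simp: zero_le_divide_iff)
    finally show ?thesis ..
  qed
  ultimately show "int i \<le> \<lfloor>log (lam / (1 - p)) (p / (1 - lam))\<rfloor> \<Longrightarrow> equilibrium_profile lam p i
           = (1 - lam) / (1 - (p + lam)) * (lam / (1 - p)) ^ i - p / (1 - (p + lam))"
    and "\<lfloor>log (lam / (1 - p)) (p / (1 - lam))\<rfloor> < int i \<Longrightarrow> equilibrium_profile lam p i = 0"
    by (auto simp: le_floor_iff floor_less_iff r_def c_def D_def)
qed

theorem theorem1:
  fixes lam p :: real
  assumes "0 \<le> lam" and "lam < 1" and "0 \<le> p" and "p \<le> 1"
  shows "(\<exists>!v. v \<in> Vbar \<and> (\<forall>i\<ge>1. Fdrift lam p v i = 0)) \<and>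
    (\<forall>v. v \<in> Vbar \<and> (\<forall>i\<ge>1. Fdrift lam p v i = 0) \<longrightarrow>
      (let s = (\<lambda>i. v i - v (i + 1)) in
        (p = 0 \<longrightarrow> (\<forall>i\<ge>1. s i = lam ^ i)) \<and>
        (p \<ge> lam \<longrightarrow> (\<forall>i\<ge>1. s i = 0)) \<and>
        (0 < p \<and> p < lam \<and> lam = 1 - p \<longrightarrow>
           (\<forall>i\<ge>1. int i \<le> \<lfloor>(1 - p) / p\<rfloor> \<longrightarrow> s i = 1 - p / (1 - p) * real i) \<and>
           (\<forall>i. int i > \<lfloor>(1 - p) / p\<rfloor> \<longrightarrow> s i = 0)) \<and>
        (0 < p \<and> p < lam \<and> lam \<noteq> 1 - p \<longrightarrow>
           (\<forall>i\<ge>1. int i \<le> \<lfloor>log (lam / (1 - p)) (p / (1 - lam))\<rfloor> \<longrightarrow>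
              s i = (1 - lam) / (1 - (p + lam)) * (lam / (1 - p)) ^ i - p / (1 - (p + lam))) \<and>
           (\<forall>i. int i > \<lfloor>log (lam / (1 - p)) (p / (1 - lam))\<rfloor> \<longrightarrow> s i = 0))))"
proof -
  let ?s = "equilibrium_profile lam p"
  have "?s \<in> Sbar" using equilibrium_profile_in_Sbar[OF assms] .
  then have solution_iff: "v \<in> Vbar \<and> (\<forall>i\<ge>1. Fdrift lam p v i = 0) \<longleftrightarrow> v = tail_sums ?s" for v
    using drift_zero_iff_equilibrium[OF assms] by (auto simp: Vbar_eq_tail_sums)
  have differences: "tail_sums ?s i - tail_sums ?s (i + 1) = ?s i" for i
    using tail_sums_Suc[OF Sbar_D(5)[OF \<open>?s \<in> Sbar\<close>], of i] by simp
  have p_lt_1: "p < lam \<Longrightarrow> p < 1" using assms(2) by simp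
  show ?thesis
  proof (simp only: solution_iff Let_def simp_thms ex1_eq, intro conjI allI impI; unfold differences)
    show "?s i = lam ^ i" if "p = 0" for i
      using that equilibrium_profile_p0[OF assms(1)] by simp
  next
    show "?s i = 0" if "lam \<le> p" "1 \<le> i" for i
      using that equilibrium_profile_vanishes assms by simp
  next
    fix i assume "0 < p \<and> p < lam \<and> lam = 1 - p"
    then show "int i \<le> \<lfloor>(1 - p) / p\<rfloor> \<Longrightarrow> ?s i = 1 - p / (1 - p) * real i"
      and "\<lfloor>(1 - p) / p\<rfloor> < int i \<Longrightarrow> ?s i = 0"
      using equilibrium_profile_critical p_lt_1 by auto
  next
    fix i assume "0 < p \<and> p < lam \<and> lam \<noteq> 1 - p"
    then show "int i \<le> \<lfloor>log (lam / (1 - p)) (p / (1 - lam))\<rfloor> \<Longrightarrow>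
        ?s i = (1 - lam) / (1 - (p + lam)) * (lam / (1 - p)) ^ i - p / (1 - (p + lam))"
      and "\<lfloor>log (lam / (1 - p)) (p / (1 - lam))\<rfloor> < int i \<Longrightarrow> ?s i = 0"
      using equilibrium_profile_noncritical p_lt_1 assms(2) by auto
  qed
qed

end
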